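(* Let $\mathcal{F}$ be a $\kappa$-complete filter over $\kappa$ which extends the club filter $\mathcal{D}_\kappa$. If $\mathrm{Gal}(\mathcal{F},\kappa^+,\kappa^{++})$ holds, then $\neg_{\mathrm{st}}\mathrm{Gal}(\mathcal{D}_{\kappa^+},\kappa^+,\kappa^{++})$ fails. In particular, $\mathrm{Gal}(\mathcal{F},\kappa^+,\kappa^+)$ entails the failure of $\neg_{\mathrm{st}}\mathrm{Gal}(\mathcal{D}_{\kappa^+},\kappa^+,\kappa^{++})$.
   Context: $\mathcal{D}_\theta$ is the club filter on $\theta$. $\mathrm{Gal}(\mathcal{F},\mu,\lambda)$: for every $\mathcal{C}\subseteq\mathcal{F}$ with $|\mathcal{C}|=\lambda$ there is $\mathcal{E}\subseteq\mathcal{C}$ with $|\mathcal{E}|=\mu$ and $\bigcap\mathcal{E}\in\mathcal{F}$. $\neg_{\mathrm{st}}\mathrm{Gal}(\mathcal{D}_{\kappa^+},\mu,\lambda)$: there is $\mathcal{C}\subseteq\mathcal{D}_{\kappa^+}$ with $|\mathcal{C}|=\lambda$ such that for every $\mathcal{E}\subseteq\mathcal{C}$ with $|\mathcal{E}|=\mu$, $|\bigcap\mathcal{E}|<\kappa$. *)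

theory Defs
  imports Main
begin

text \<open>Cardinals are represented by cardinal orders (well-orders) as in the
BNF cardinal library of Main; the cardinal kappa is a relation r with
Card_order r, kappa^+ is cardSuc r, kappa^++ is cardSuc (cardSuc r).\<close>

definition is_lub :: "'a rel \<Rightarrow> 'a set \<Rightarrow> 'a \<Rightarrow> bool" where
  "is_lub w B a \<longleftrightarrow> a \<in> Field w \<and> (\<forall>b\<in>B. (b, a) \<in> w) \<and>
     (\<forall>a'\<in>Field w. (\<forall>b\<in>B. (b, a') \<in> w) \<longrightarrow> (a, a') \<in> w)"

definition closed_in_wo :: "'a rel \<Rightarrow> 'a set \<Rightarrow> bool" where
  "closed_in_wo w C \<longleftrightarrow> (\<forall>B a. B \<subseteq> C \<and> B \<noteq> {} \<and> is_lub w B a \<longrightarrow> a \<in> C)"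

definition unbounded_in_wo :: "'a rel \<Rightarrow> 'a set \<Rightarrow> bool" where
  "unbounded_in_wo w C \<longleftrightarrow> (\<forall>a\<in>Field w. \<exists>c\<in>C. (a, c) \<in> w \<and> a \<noteq> c)"

definition club :: "'a rel \<Rightarrow> 'a set \<Rightarrow> bool" where
  "club w C \<longleftrightarrow> C \<subseteq> Field w \<and> closed_in_wo w C \<and> unbounded_in_wo w C"

definition club_filter :: "'a rel \<Rightarrow> 'a set set" where
  "club_filter w = {X. X \<subseteq> Field w \<and> (\<exists>C. club w C \<and> C \<subseteq> X)}"

definition filter_over :: "'a set \<Rightarrow> 'a set set \<Rightarrow> bool" where
  "filter_over S F \<longleftrightarrow> (\<forall>X\<in>F. X \<subseteq> S) \<and> S \<in> F \<and> {} \<notin> F \<and>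
     (\<forall>X Y. X \<in> F \<and> X \<subseteq> Y \<and> Y \<subseteq> S \<longrightarrow> Y \<in> F) \<and>
     (\<forall>X Y. X \<in> F \<and> Y \<in> F \<longrightarrow> X \<inter> Y \<in> F)"

definition complete_filter :: "'b rel \<Rightarrow> 'a set set \<Rightarrow> bool" where
  "complete_filter kappa F \<longleftrightarrow>
     (\<forall>E. E \<subseteq> F \<and> E \<noteq> {} \<and> (card_of E, kappa) \<in> ordLess \<longrightarrow> \<Inter>E \<in> F)"

definition Gal :: "'a set set \<Rightarrow> 'b rel \<Rightarrow> 'c rel \<Rightarrow> bool" where
  "Gal F mu lam \<longleftrightarrow>
     (\<forall>C. C \<subseteq> F \<and> (card_of C, lam) \<in> ordIso \<longrightarrow>
        (\<exists>E. E \<subseteq> C \<and> (card_of E, mu) \<in> ordIso \<and> \<Inter>E \<in> F))"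

definition neg_st_Gal :: "'a rel \<Rightarrow> 'b rel \<Rightarrow> 'c rel \<Rightarrow> bool" where
  "neg_st_Gal kappa mu lam \<longleftrightarrow>
     (\<exists>C. C \<subseteq> club_filter (cardSuc kappa) \<and> (card_of C, lam) \<in> ordIso \<and>
        (\<forall>E. E \<subseteq> C \<and> (card_of E, mu) \<in> ordIso \<longrightarrow>
             (card_of (\<Inter>E), kappa) \<in> ordLess))"

end

theory Submission
  imports Defs
begin

unbundle cardinal_syntax

(*
  Each club D in the witness family C for neg_st Gal contains a club D' with a limit point
  delta < kappa^+ of cofinality kappa; for a continuous cofinal map c : kappa -> delta the
  preimage of D' under c is club in kappa and hence lies in F.  As C has kappa^++ members
  and there are only kappa^+ candidates for delta, kappa^++ members share the same delta and
  so the same map c.  Their preimages under c are kappa^++ sets in F (or kappa^+ of them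
  coincide), so Gal(F, kappa^+, kappa^++) yields kappa^+ clubs E from C whose preimages meet
  in a set X in F.  The injective image c[X] lies in the intersection of E, which has size
  less than kappa, whereas kappa-completeness and the tails of kappa put only sets of size
  kappa into F.  Gal(F, kappa^+, kappa^+) implies Gal(F, kappa^+, kappa^++), which gives
  the second claim.
*)

section \<open>Well-orders, suprema and clubs\<close>

context wo_rel
begin

lemma is_lub_iff_isMinim_Above: "is_lub r B a \<longleftrightarrow> isMinim (Above B) a"
  by (auto simp: is_lub_def isMinim_def Above_def)

lemma is_lub_supr:
  assumes "B \<subseteq> Field r" and "Above B \<noteq> {}"
  shows "is_lub r B (supr B)"
proof -
  have "Above B \<subseteq> Field r" by (auto simp: Above_def)
  then have "isMinim (Above B) (supr B)" unfolding supr_def using assms(2) by (rule minim_isMinim)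
  then show ?thesis by (simp add: is_lub_iff_isMinim_Above)
qed

lemma underS_under_trans:
  assumes "x \<in> underS a" and "(a, b) \<in> r"
  shows "x \<in> underS b"
proof -
  have xa: "(x, a) \<in> r" "x \<noteq> a" using assms(1) by (auto simp: underS_def)
  then have "(x, b) \<in> r" using assms(2) TRANS by (blast dest: transD)
  moreover have "x \<noteq> b" using xa assms(2) ANTISYM by (auto dest: antisymD)
  ultimately show ?thesis by (simp add: underS_def)
qed

lemma under_underS_trans:
  assumes "(x, a) \<in> r" and "a \<in> underS b"
  shows "x \<in> underS b"
proof -
  have ab: "(a, b) \<in> r" "a \<noteq> b" using assms(2) by (auto simp: underS_def)
  then have "(x, b) \<in> r" using assms(1) TRANS by (blast dest: transD)
  moreover have "x \<noteq> b" using ab assms(1) ANTISYM by (auto dest: antisymD)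
  ultimately show ?thesis by (simp add: underS_def)
qed

lemma underS_trans: "x \<in> underS a \<Longrightarrow> a \<in> underS b \<Longrightarrow> x \<in> underS b"
  by (rule underS_under_trans) (auto simp: underS_def)

lemma not_underS_iff:
  assumes "a \<in> Field r" and "b \<in> Field r"
  shows "a \<notin> underS b \<longleftrightarrow> (b, a) \<in> r"
proof
  assume "a \<notin> underS b"
  then have "(a, b) \<notin> r \<or> a = b" by (auto simp: underS_def)
  then show "(b, a) \<in> r" using in_notinI assms by blast
next
  assume "(b, a) \<in> r"
  then show "a \<notin> underS b" using ANTISYM by (auto simp: underS_def dest: antisymD)
qed

lemma finite_has_greatest:
  assumes "finite B" and "B \<noteq> {}" and "B \<subseteq> Field r"
  shows "\<exists>b\<in>B. \<forall>b'\<in>B. (b', b) \<in> r"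
  using assms
proof (induction B rule: finite_ne_induct)
  case (singleton x)
  then show ?case using REFL by (simp add: refl_on_def)
next
  case (insert x B)
  then obtain b where b: "b \<in> B" "\<forall>b'\<in>B. (b', b) \<in> r" by auto
  have x: "x \<in> Field r" and bF: "b \<in> Field r" using insert.prems b(1) by auto
  show ?case
  proof (cases "(x, b) \<in> r")
    case True
    then show ?thesis using b by blast
  next
    case False
    then have bx: "(b, x) \<in> r" using TOTALS x bF by blast
    have "(b', x) \<in> r" if "b' \<in> insert x B" for b'
    proof (cases "b' = x")
      case True
      then show ?thesis using REFL x by (simp add: refl_on_def)
    next
      case False
      then show ?thesis using that b(2) bx TRANS by (blast dest: transD)
    qed
    then show ?thesis by blast
  qed
qed

lemma is_lub_finite_mem:
  assumes "finite B" and "B \<noteq> {}" and "B \<subseteq> Field r" and "is_lub r B a"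
  shows "a \<in> B"
proof -
  obtain b where b: "b \<in> B" "\<forall>b'\<in>B. (b', b) \<in> r" using finite_has_greatest assms(1-3) by blast
  then have "(a, b) \<in> r" "(b, a) \<in> r" using assms(3,4) unfolding is_lub_def by blast+
  then show ?thesis using b(1) ANTISYM antisymD by fastforce
qed

lemma unbounded_in_wo_iff_underS: "unbounded_in_wo r C \<longleftrightarrow> (\<forall>x\<in>Field r. \<exists>c\<in>C. x \<in> underS c)"
  by (auto simp: unbounded_in_wo_def underS_def)

lemma club_aboveS:
  assumes no_max: "\<And>x. x \<in> Field r \<Longrightarrow> \<exists>y\<in>Field r. x \<noteq> y \<and> (x, y) \<in> r"
    and a: "a \<in> Field r"
  shows "club r (aboveS a)"
proof -
  have mem_iff: "b \<in> aboveS a \<longleftrightarrow> a \<in> underS b" for b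
    by (auto simp: aboveS_def underS_def)
  have "closed_in_wo r (aboveS a)"
    unfolding closed_in_wo_def
  proof (intro allI impI)
    fix B l assume B: "B \<subseteq> aboveS a \<and> B \<noteq> {} \<and> is_lub r B l"
    then obtain b where b: "b \<in> B" by blast
    then have "a \<in> underS b" using B mem_iff by blast
    moreover have "(b, l) \<in> r" using B b by (simp add: is_lub_def)
    ultimately show "l \<in> aboveS a" unfolding mem_iff by (rule underS_under_trans)
  qed
  moreover have "unbounded_in_wo r (aboveS a)"
    unfolding unbounded_in_wo_iff_underS
  proof
    fix x assume x: "x \<in> Field r"
    have "max2 x a \<in> Field r" using max2_among[OF x a] x a by auto
    then obtain y where "max2 x a \<noteq> y" "(max2 x a, y) \<in> r" using no_max by blast
    then have m: "max2 x a \<in> underS y" by (simp add: underS_def)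
    have "x \<in> underS y" "a \<in> underS y"
      using under_underS_trans[OF _ m] max2_greater[OF x a] by auto
    then show "\<exists>c\<in>aboveS a. x \<in> underS c" using mem_iff by blast
  qed
  moreover have "aboveS a \<subseteq> Field r" by (auto simp: aboveS_def Field_def)
  ultimately show ?thesis by (simp add: club_def)
qed

lemma seq_underS:
  assumes incr: "\<And>n. g n \<in> underS (g (Suc n))" and "m < n"
  shows "g m \<in> underS (g n)"
  using \<open>m < n\<close>
proof (induction n)
  case 0
  then show ?case by simp
next
  case (Suc n)
  then show ?case
    using incr underS_trans by (cases "m = n") auto
qed

lemma seq_mono:
  assumes incr: "\<And>n. g n \<in> underS (g (Suc n))" and "m \<le> n"
  shows "(g m, g n) \<in> r"
proof (cases "m = n")
  case True
  have "g n \<in> Field r" using incr[of n] by (auto simp: underS_def Field_def)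
  then show ?thesis using True REFL by (simp add: refl_on_def)
next
  case False
  then show ?thesis using seq_underS[of g, OF incr] \<open>m \<le> n\<close> by (simp add: underS_def)
qed

lemma seq_index_le:
  assumes incr: "\<And>n. g n \<in> underS (g (Suc n))" and "(g m, g n) \<in> r"
  shows "m \<le> n"
proof (rule ccontr)
  assume "\<not> m \<le> n"
  then have "g n \<in> underS (g m)" using seq_underS[of g, OF incr] by simp
  then show False using assms(2) ANTISYM by (auto simp: underS_def dest: antisymD)
qed

lemma club_range_seq:
  assumes incr: "\<And>n. g n \<in> underS (g (Suc n))"
    and cofinal: "\<And>x. x \<in> Field r \<Longrightarrow> \<exists>n. (x, g n) \<in> r"
  shows "club r (range g)"
proof -
  have gF: "g n \<in> Field r" for n using incr[of n] by (auto simp: underS_def Field_def)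
  have "closed_in_wo r (range g)"
    unfolding closed_in_wo_def
  proof (intro allI impI)
    fix B l assume "B \<subseteq> range g \<and> B \<noteq> {} \<and> is_lub r B l"
    then have B: "B \<subseteq> range g" "B \<noteq> {}" and lub: "is_lub r B l" by simp_all
    then have l: "l \<in> Field r" "\<forall>b\<in>B. (b, l) \<in> r" by (simp_all add: is_lub_def)
    obtain N where N: "(l, g N) \<in> r" using cofinal[OF l(1)] by blast
    have "B \<subseteq> g ` {..N}"
    proof
      fix b assume "b \<in> B"
      moreover obtain m where "b = g m" using \<open>b \<in> B\<close> B(1) by blast
      ultimately have m: "b = g m" "(g m, l) \<in> r" using l(2) by simp_all
      then have "(g m, g N) \<in> r" using N TRANS by (blast dest: transD)
      then show "b \<in> g ` {..N}" using m(1) seq_index_le[of g, OF incr] by simp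
    qed
    then have "finite B" by (rule finite_subset) simp
    moreover have "B \<subseteq> Field r" using B(1) gF by blast
    ultimately have "l \<in> B" using is_lub_finite_mem B(2) lub by blast
    then show "l \<in> range g" using B(1) by blast
  qed
  moreover have "unbounded_in_wo r (range g)"
    unfolding unbounded_in_wo_iff_underS
  proof
    fix x assume "x \<in> Field r"
    then obtain n where "(x, g n) \<in> r" using cofinal by blast
    then have "x \<in> underS (g (Suc n))" using under_underS_trans incr by blast
    then show "\<exists>c\<in>range g. x \<in> underS c" by blast
  qed
  ultimately show ?thesis using gF by (auto simp: club_def)
qed

lemma club_range_subseq:
  fixes h :: "nat \<Rightarrow> nat"
  assumes incr: "\<And>n. g n \<in> underS (g (Suc n))"
    and cofinal: "\<And>x. x \<in> Field r \<Longrightarrow> \<exists>n. (x, g n) \<in> r"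
    and "strict_mono h"
  shows "club r (range (g \<circ> h))"
proof (rule club_range_seq[of "g \<circ> h"])
  show "(g \<circ> h) n \<in> underS ((g \<circ> h) (Suc n))" for n
    using seq_underS[of g, OF incr] \<open>strict_mono h\<close> by (simp add: strict_mono_Suc_iff)
  fix x assume "x \<in> Field r"
  then obtain n where "(x, g n) \<in> r" using cofinal by blast
  moreover have "(g n, g (h n)) \<in> r"
    using seq_mono[of g, OF incr] strict_mono_imp_increasing[OF \<open>strict_mono h\<close>] by blast
  ultimately show "\<exists>n. (x, (g \<circ> h) n) \<in> r" using TRANS by (auto dest: transD)
qed

lemma closed_in_wo_lub_mem:
  assumes D: "closed_in_wo r D" and lub: "is_lub r A x" and "A \<noteq> {}"
    and interleave: "\<And>a. a \<in> A \<Longrightarrow> \<exists>d\<in>D. (a, d) \<in> r \<and> (d, x) \<in> r"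
  shows "x \<in> D"
proof -
  let ?B = "{d \<in> D. (d, x) \<in> r}"
  have x: "x \<in> Field r" using lub by (simp add: is_lub_def)
  have "is_lub r ?B x"
    unfolding is_lub_def
  proof (intro conjI ballI impI)
    fix a' assume a': "a' \<in> Field r" "\<forall>b\<in>?B. (b, a') \<in> r"
    have "(a, a') \<in> r" if "a \<in> A" for a
      using interleave[OF that] a'(2) TRANS by (blast dest: transD)
    then show "(x, a') \<in> r" using lub a'(1) by (simp add: is_lub_def)
  qed (use x in auto)
  moreover have "?B \<noteq> {}" using interleave \<open>A \<noteq> {}\<close> by blast
  moreover have "?B \<subseteq> D" by blast
  ultimately show ?thesis using D unfolding closed_in_wo_def by blast
qed

end

lemma embed_underS_mono:
  assumes r: "Well_order r" and e: "embed r r' e" and "i \<in> underS r j"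
  shows "e i \<in> underS r' (e j)"
proof -
  have "(i, j) \<in> r" "i \<noteq> j" using assms(3) by (auto simp: underS_def)
  moreover have "i \<in> Field r" "j \<in> Field r" using \<open>(i, j) \<in> r\<close> by (auto simp: Field_def)
  ultimately have "(e i, e j) \<in> r'" "e i \<noteq> e j"
    using embed_compat[OF e] embed_inj_on[OF r e] by (auto simp: compat_def inj_on_def)
  then show ?thesis by (simp add: underS_def)
qed

lemma embed_reflects:
  assumes r: "Well_order r" and r': "Well_order r'" and e: "embed r r' e"
    and i: "i \<in> Field r" and j: "j \<in> Field r" and le: "(e i, e j) \<in> r'"
  shows "(i, j) \<in> r"
proof (rule ccontr)
  assume "(i, j) \<notin> r"
  then have "j \<in> underS r i"
    using wo_rel.not_underS_iff[of r i j] r i j by (auto simp: wo_rel_def underS_def)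
  then have "e j \<in> underS r' (e i)" by (rule embed_underS_mono[OF r e])
  then show False using le wo_rel.ANTISYM[of r'] r' by (auto simp: wo_rel_def underS_def dest: antisymD)
qed

text \<open>The supremum of \<open>e ` B\<close> lies in the closed set \<open>D\<close> below \<open>e a\<close>, hence in the initial
  segment \<open>e ` Field r\<close> of \<open>D\<close>; so it is the image of an upper bound of \<open>B\<close>.\<close>

lemma embed_Restr_closed_is_lub:
  assumes r: "Well_order r" and s: "Well_order s" and D: "closed_in_wo s D"
    and e: "embed r (Restr s D) e"
    and B: "B \<subseteq> Field r" "B \<noteq> {}" and lub: "is_lub r B a"
  shows "is_lub s (e ` B) (e a)"
proof -
  let ?w = "Restr s D"
  have ws: "wo_rel s" using s by (simp add: wo_rel_def)
  have w: "Well_order ?w" using Well_order_Restr[OF s] .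
  have a: "a \<in> Field r" and aB: "\<forall>b\<in>B. (b, a) \<in> r" using lub by (simp_all add: is_lub_def)
  have "Field ?w \<subseteq> Field s" by (rule mono_Field) blast
  then have eD: "e i \<in> D" and eF: "e i \<in> Field s" if "i \<in> Field r" for i
    using embed_in_Field[OF e that] Field_Restr_subset[of s D] by blast+
  have emono: "(e i, e j) \<in> s" if "(i, j) \<in> r" for i j
    using embed_compat[OF e] that by (auto simp: compat_def)
  have ub: "e a \<in> wo_rel.Above s (e ` B)"
    using aB emono eF[OF a] by (simp add: Above_def)
  have "e ` B \<subseteq> Field s" using eF B(1) by blast
  then obtain z where z: "is_lub s (e ` B) z" using wo_rel.is_lub_supr[OF ws] ub by blast
  have "e ` B \<subseteq> D" "e ` B \<noteq> {}" using eD B by blast+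
  then have zD: "z \<in> D" using D z unfolding closed_in_wo_def by blast
  have za: "(z, e a) \<in> s" using z ub by (simp add: is_lub_def Above_def)
  then have "z \<in> under ?w (e a)" using zD eD[OF a] by (simp add: under_def)
  moreover have "wo_rel.ofilter ?w (e ` Field r)" by (rule embed_Field_ofilter[OF r w e])
  ultimately obtain a1 where a1: "a1 \<in> Field r" "z = e a1"
    using a unfolding Order_Relation.ofilter_def by blast
  have "(b, a1) \<in> r" if "b \<in> B" for b
  proof (rule embed_reflects[OF r w e])
    show b: "b \<in> Field r" using that B(1) by blast
    have "(e b, z) \<in> s" using z that by (simp add: is_lub_def)
    then show "(e b, e a1) \<in> ?w" using a1 eD[OF b] eD[OF a1(1)] by simp
  qed (rule a1(1))
  then have "(a, a1) \<in> r" using lub a1(1) by (simp add: is_lub_def)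
  then have "(e a, z) \<in> s" using emono a1(2) by simp
  then have "z = e a" using za wo_rel.ANTISYM[OF ws] by (auto dest: antisymD)
  then show ?thesis using z by simp
qed

section \<open>Continuous cofinal maps\<close>

definition normal_cofinal :: "'a rel \<Rightarrow> 'b rel \<Rightarrow> 'b \<Rightarrow> ('a \<Rightarrow> 'b) \<Rightarrow> bool" where
  "normal_cofinal r s \<delta> c \<longleftrightarrow>
     (\<forall>i\<in>Field r. c i \<in> underS s \<delta>) \<and>
     (\<forall>i j. i \<in> underS r j \<longrightarrow> c i \<in> underS s (c j)) \<and>
     (\<forall>B a. B \<subseteq> Field r \<and> B \<noteq> {} \<and> is_lub r B a \<longrightarrow> is_lub s (c ` B) (c a)) \<and>
     (\<forall>x\<in>underS s \<delta>. \<exists>i\<in>Field r. (x, c i) \<in> s)"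

definition limit_point :: "'a rel \<Rightarrow> 'a set \<Rightarrow> 'a \<Rightarrow> bool" where
  "limit_point s D \<delta> \<longleftrightarrow> (\<forall>x\<in>underS s \<delta>. \<exists>d\<in>D. x \<in> underS s d \<and> d \<in> underS s \<delta>)"

lemma embed_Restr_closed_normal_cofinal:
  assumes r: "Well_order r" and s: "Well_order s" and D: "closed_in_wo s D"
    and e: "embed r (Restr s D) e" and bounded: "AboveS s (e ` Field r) \<noteq> {}"
  shows "normal_cofinal r s (wo_rel.suc s (e ` Field r)) e"
proof -
  let ?A = "e ` Field r" and ?\<delta> = "wo_rel.suc s (e ` Field r)"
  have ws: "wo_rel s" using s by (simp add: wo_rel_def)
  have "Field (Restr s D) \<subseteq> Field s" by (rule mono_Field) blast
  then have A: "?A \<subseteq> Field s" using embed_Field[OF e] by blast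
  have "e i \<in> underS s ?\<delta>" if "i \<in> Field r" for i
    using wo_rel.suc_greater[OF ws A bounded, of "e i"] that by (auto simp: underS_def)
  moreover have "e i \<in> underS s (e j)" if "i \<in> underS r j" for i j
    using embed_underS_mono[OF r e that] by (auto simp: underS_def)
  moreover have "\<exists>i\<in>Field r. (x, e i) \<in> s" if x: "x \<in> underS s ?\<delta>" for x
  proof -
    have xF: "x \<in> Field s" using x by (auto simp: underS_def Field_def)
    have "x \<notin> AboveS s ?A"
    proof
      assume "x \<in> AboveS s ?A"
      then have "(?\<delta>, x) \<in> s" by (rule wo_rel.suc_least_AboveS[OF ws])
      then show False using x wo_rel.ANTISYM[OF ws] by (auto simp: underS_def dest: antisymD)
    qed
    then obtain i where i: "i \<in> Field r" "e i \<notin> underS s x"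
      using xF by (auto simp: AboveS_def underS_def)
    then have "(x, e i) \<in> s" using wo_rel.not_underS_iff[OF ws] xF A by blast
    then show ?thesis using i(1) by blast
  qed
  ultimately show ?thesis
    using embed_Restr_closed_is_lub[OF r s D e] by (simp add: normal_cofinal_def)
qed

lemma AboveS_nonempty_if_ordLess:
  assumes s: "Card_order s" "\<not> finite (Field s)" "regularCard s"
    and A: "A \<subseteq> Field s" "|A| <o s"
  shows "AboveS s A \<noteq> {}"
proof -
  have ws: "wo_rel s" using s(1) by (rule Card_order_wo_rel)
  have "\<not> cofinal A s"
    using s(3) A not_ordLess_ordIso unfolding regularCard_def by blast
  then obtain a where a: "a \<in> Field s" "\<forall>b\<in>A. a = b \<or> (a, b) \<notin> s"
    unfolding cofinal_def by blast
  obtain a' where "a \<noteq> a'" "(a, a') \<in> s" using infinite_Card_order_limit[OF s(1,2) a(1)] by blast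
  then have a': "a \<in> underS s a'" by (simp add: underS_def)
  have "b \<in> underS s a'" if "b \<in> A" for b
  proof -
    have "(b, a) \<in> s" using wo_rel.not_underS_iff[OF ws] a that A by (auto simp: underS_def)
    then show ?thesis using wo_rel.under_underS_trans[OF ws _ a'] by blast
  qed
  then have "a' \<in> AboveS s A" using a' by (auto simp: AboveS_def underS_def Field_def)
  then show ?thesis by blast
qed

lemma exists_embed_Restr_club:
  assumes s: "Card_order s" "regularCard s" and rs: "r \<le>o s" and D: "club s D"
  shows "\<exists>e. embed r (Restr s D) e"
proof -
  have DF: "D \<subseteq> Field s" and "cofinal D s"
    using D by (auto simp: club_def unbounded_in_wo_def cofinal_def)
  then have "|D| =o s" using s(2) by (simp add: regularCard_def)
  moreover have "Well_order (Restr s D)" using Well_order_Restr s(1) by (blast dest: card_order_on_well_order_on)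
  moreover have "Field (Restr s D) = D"
    using Refl_Field_Restr2[OF _ DF] s(1) by (simp add: card_order_on_def order_on_defs)
  ultimately have "s \<le>o Restr s D"
    using card_of_least ordIso_ordLeq_trans ordIso_symmetric by (metis well_order_on_Well_order)
  then have "r \<le>o Restr s D" using rs ordLeq_transitive by blast
  then show ?thesis by (simp add: ordLeq_def)
qed

lemma exists_normal_cofinal_limit_point:
  assumes r: "Card_order r" "\<not> finite (Field r)"
    and s: "Card_order s" "regularCard s" "r <o s" and D: "club s D"
  shows "\<exists>\<delta>\<in>Field s. (\<exists>c. normal_cofinal r s \<delta> c) \<and> limit_point s D \<delta>"
proof -
  have wr: "Well_order r" and ws': "Well_order s" using r(1) s(1) by (simp_all add: card_order_on_def)
  have ws: "wo_rel s" using s(1) by (rule Card_order_wo_rel)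
  have s_inf: "\<not> finite (Field s)"
  proof
    assume "finite (Field s)"
    then have "s <o r" by (rule finite_ordLess_infinite[OF ws' wr _ r(2)])
    then show False using not_ordLess_ordLeq ordLess_imp_ordLeq[OF s(3)] by blast
  qed
  \<comment> \<open>\<open>e\<close> maps \<open>r\<close> onto an initial segment of \<open>D\<close>; \<open>\<delta>\<close> is its least strict upper bound.\<close>
  obtain e where e: "embed r (Restr s D) e"
    using exists_embed_Restr_club[OF s(1,2) ordLess_imp_ordLeq[OF s(3)] D] by blast
  let ?A = "e ` Field r"
  have "Field (Restr s D) \<subseteq> Field s" by (rule mono_Field) blast
  then have A: "?A \<subseteq> Field s" using embed_Field[OF e] by blast
  have "|?A| \<le>o r" using ordLeq_ordIso_trans[OF card_of_image card_of_Field_ordIso[OF r(1)]] .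
  then have "|?A| <o s" using s(3) by (rule ordLeq_ordLess_trans)
  then have bounded: "AboveS s ?A \<noteq> {}" using AboveS_nonempty_if_ordLess s(1,2) s_inf A by blast
  define \<delta> where "\<delta> = wo_rel.suc s ?A"
  have closed: "closed_in_wo s D" using D by (simp add: club_def)
  have c: "normal_cofinal r s \<delta> e"
    unfolding \<delta>_def by (rule embed_Restr_closed_normal_cofinal[OF wr ws' closed e bounded])
  have "limit_point s D \<delta>"
    unfolding limit_point_def
  proof
    fix x assume "x \<in> underS s \<delta>"
    then obtain i where i: "i \<in> Field r" "(x, e i) \<in> s" using c by (auto simp: normal_cofinal_def)
    obtain j where j: "j \<in> Field r" "i \<in> underS r j"
      using infinite_Card_order_limit[OF r i(1)] by (auto simp: underS_def)
    then have "e i \<in> underS s (e j)" using c by (simp add: normal_cofinal_def)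
    then have "x \<in> underS s (e j)" using wo_rel.under_underS_trans[OF ws i(2)] by blast
    moreover have "e j \<in> D" using embed_in_Field[OF e j(1)] Field_Restr_subset[of s D] by blast
    moreover have "e j \<in> underS s \<delta>" using c j(1) by (simp add: normal_cofinal_def)
    ultimately show "\<exists>d\<in>D. x \<in> underS s d \<and> d \<in> underS s \<delta>" by blast
  qed
  moreover have "\<delta> \<in> Field s" unfolding \<delta>_def by (rule wo_rel.suc_inField[OF ws A bounded])
  ultimately show ?thesis using c by blast
qed

lemma normal_cofinal_mono:
  assumes s: "Well_order s" and c: "normal_cofinal r s \<delta> c" and ij: "(i, j) \<in> r"
  shows "(c i, c j) \<in> s"
proof (cases "i = j")
  case True
  have "j \<in> Field r" using ij by (auto simp: Field_def)
  then have "c j \<in> Field s" using c by (auto simp: normal_cofinal_def underS_def Field_def)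
  then show ?thesis using True wo_rel.REFL[of s] s by (simp add: wo_rel_def refl_on_def)
next
  case False
  then have "i \<in> underS r j" using ij by (simp add: underS_def)
  then show ?thesis using c by (simp add: normal_cofinal_def underS_def)
qed

lemma normal_cofinal_limit_point_step:
  assumes r: "Well_order r" and s: "Well_order s"
    and c: "normal_cofinal r s \<delta> c" and lim: "limit_point s D \<delta>" and k: "k \<in> Field r"
  shows "\<exists>k'. k \<in> underS r k' \<and> (\<exists>d\<in>D. c k \<in> underS s d \<and> (d, c k') \<in> s)"
proof -
  have ws: "wo_rel s" using s by (simp add: wo_rel_def)
  have "c k \<in> underS s \<delta>" using c k by (simp add: normal_cofinal_def)
  then obtain d where d: "d \<in> D" "c k \<in> underS s d" "d \<in> underS s \<delta>"
    using lim by (auto simp: limit_point_def)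
  then obtain k' where k': "k' \<in> Field r" "(d, c k') \<in> s"
    using c by (auto simp: normal_cofinal_def)
  have "k \<in> underS r k'"
  proof (rule ccontr)
    assume "k \<notin> underS r k'"
    then have "(k', k) \<in> r" using wo_rel.not_underS_iff[of r k k'] r k k'(1) by (simp add: wo_rel_def)
    then have "(c k', c k) \<in> s" by (rule normal_cofinal_mono[OF s c])
    then have "c k \<in> underS s (c k)"
      using wo_rel.underS_under_trans[OF ws wo_rel.underS_under_trans[OF ws d(2) k'(2)]] by blast
    then show False by (simp add: underS_def)
  qed
  then show ?thesis using d k' by blast
qed

lemma normal_cofinal_inj_on:
  assumes r: "Well_order r" and c: "normal_cofinal r s \<delta> c"
  shows "inj_on c (Field r)"
proof (rule inj_onI)
  fix i j assume ij: "i \<in> Field r" "j \<in> Field r" "c i = c j"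
  have "c a \<noteq> c b" if "a \<in> underS r b" for a b
    using c that by (auto simp: normal_cofinal_def underS_def)
  moreover have "i \<in> underS r j \<or> j \<in> underS r i \<or> i = j"
    using wo_rel.not_underS_iff[of r i j] r ij(1,2) by (auto simp: wo_rel_def underS_def)
  ultimately show "i = j" using ij(3) by metis
qed

section \<open>Cardinal pigeonholes and the Galvin property\<close>

lemma nonempty_if_card_of_ordIso_infinite:
  assumes s: "Card_order s" "\<not> finite (Field s)" and A: "|A| =o s"
  shows "A \<noteq> {}"
proof
  assume "A = {}"
  then have "finite (Field s)"
    using card_of_ordIso_finite_Field[OF s(1) ordIso_symmetric[OF A]] by simp
  then show False using s(2) by contradiction
qed

lemma obtain_subset_card_of_ordIso:
  assumes s: "Card_order s" and le: "s \<le>o |A|"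
  obtains B where "B \<subseteq> A" and "|B| =o s"
proof -
  have "|Field s| \<le>o |A|" using ordIso_ordLeq_trans[OF card_of_Field_ordIso[OF s] le] .
  then obtain g where g: "inj_on g (Field s)" "g ` Field s \<subseteq> A"
    unfolding card_of_ordLeq[symmetric] by blast
  have "bij_betw g (Field s) (g ` Field s)" by (rule inj_on_imp_bij_betw[OF g(1)])
  then have "|g ` Field s| =o |Field s|" using card_of_ordIso ordIso_symmetric by blast
  then have "|g ` Field s| =o s" using card_of_Field_ordIso[OF s] by (rule ordIso_transitive)
  then show ?thesis using g(2) that by blast
qed

lemma card_of_ordIso_cardSuc_if_between:
  assumes s: "Card_order s" and gt: "\<not> |A| \<le>o s" and le: "|A| \<le>o cardSuc s"
  shows "|A| =o cardSuc s"
proof -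
  have "s <o |A|"
    using gt not_ordLeq_iff_ordLess[OF card_order_on_well_order_on[OF s] card_of_Well_order] by blast
  then have "cardSuc s \<le>o |A|" using cardSuc_ordLess_ordLeq[OF s card_of_Card_order] by blast
  then show ?thesis using le by (simp add: ordIso_iff_ordLeq)
qed

lemma not_ordLeq_if_ordIso_cardSuc:
  assumes s: "Card_order s" and A: "|A| =o cardSuc s"
  shows "\<not> |A| \<le>o s"
proof
  assume "|A| \<le>o s"
  then have "cardSuc s \<le>o s" by (rule ordIso_ordLeq_trans[OF ordIso_symmetric[OF A]])
  then show False using not_ordLess_ordLeq[OF cardSuc_greater[OF s]] by contradiction
qed

lemma large_fiber_or_large_image:
  assumes s: "Card_order s" "\<not> finite (Field s)" and A: "\<not> |A| \<le>o s"
  shows "(\<exists>y\<in>f ` A. \<not> |{x \<in> A. f x = y}| \<le>o s) \<or> \<not> |f ` A| \<le>o s"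
proof (rule ccontr)
  assume "\<not> ?thesis"
  then have "|\<Union>y\<in>f ` A. {x \<in> A. f x = y}| \<le>o s"
    by (intro card_of_UNION_ordLeq_infinite_Field[OF s(2,1)]) auto
  moreover have "(\<Union>y\<in>f ` A. {x \<in> A. f x = y}) = A" by blast
  ultimately show False using A by simp
qed

lemma obtain_fiber_card_of_ordIso_cardSuc:
  assumes s: "Card_order s" "\<not> finite (Field s)"
    and A: "|A| =o cardSuc s" and f: "f ` A \<subseteq> Field s"
  obtains y where "|{x \<in> A. f x = y}| =o cardSuc s"
proof -
  have "|f ` A| \<le>o s"
    using ordLeq_ordIso_trans[OF card_of_mono1[OF f] card_of_Field_ordIso[OF s(1)]] .
  with large_fiber_or_large_image[OF s not_ordLeq_if_ordIso_cardSuc[OF s(1) A]]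
  obtain y where y: "\<not> |{x \<in> A. f x = y}| \<le>o s" by auto
  have "{x \<in> A. f x = y} \<subseteq> A" by blast
  then have "|{x \<in> A. f x = y}| \<le>o cardSuc s" using ordLeq_ordIso_trans[OF card_of_mono1 A] by blast
  then show ?thesis by (rule that[OF card_of_ordIso_cardSuc_if_between[OF s(1) y]])
qed

lemma GalE:
  assumes "Gal F mu lam" and "C \<subseteq> F" and "|C| =o lam"
  obtains E where "E \<subseteq> C" and "|E| =o mu" and "\<Inter>E \<in> F"
  using assms(1)[unfolded Gal_def, rule_format, OF conjI[OF assms(2,3)]] that by blast

lemma Gal_mono:
  assumes G: "Gal F mu lam" and lam: "Card_order lam" and le: "lam \<le>o lam'"
  shows "Gal F mu lam'"
  unfolding Gal_def
proof (intro allI impI)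
  fix C assume "C \<subseteq> F \<and> |C| =o lam'"
  then have C: "C \<subseteq> F" "|C| =o lam'" by simp_all
  have "lam \<le>o |C|" by (rule ordLeq_ordIso_trans[OF le ordIso_symmetric[OF C(2)]])
  then obtain C' where C': "C' \<subseteq> C" "|C'| =o lam" by (rule obtain_subset_card_of_ordIso[OF lam])
  have "C' \<subseteq> F" using C(1) C'(1) by blast
  then obtain E where "E \<subseteq> C'" "|E| =o mu" "\<Inter>E \<in> F" by (rule GalE[OF G _ C'(2)])
  then show "\<exists>E\<subseteq>C. |E| =o mu \<and> \<Inter>E \<in> F" using C'(1) by blast
qed

lemma Gal_cardSuc_imageE:
  assumes s: "Card_order s" "\<not> finite (Field s)" and G: "Gal F s (cardSuc s)"
    and A: "|A| =o cardSuc s" and f: "f ` A \<subseteq> F"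
  obtains E where "E \<subseteq> A" and "|E| =o s" and "\<Inter>(f ` E) \<in> F"
  using large_fiber_or_large_image[OF s not_ordLeq_if_ordIso_cardSuc[OF s(1) A]]
proof
  assume "\<exists>y\<in>f ` A. \<not> |{x \<in> A. f x = y}| \<le>o s"
  then obtain y where y: "y \<in> f ` A" and large: "\<not> |{x \<in> A. f x = y}| \<le>o s" by blast
  have "s <o |{x \<in> A. f x = y}|"
    using not_ordLeq_iff_ordLess[OF card_order_on_well_order_on[OF s(1)] card_of_Well_order] large ..
  then have "s \<le>o |{x \<in> A. f x = y}|" by (rule ordLess_imp_ordLeq)
  then obtain E where E: "E \<subseteq> {x \<in> A. f x = y}" "|E| =o s"
    by (rule obtain_subset_card_of_ordIso[OF s(1)])
  moreover have "E \<noteq> {}" by (rule nonempty_if_card_of_ordIso_infinite[OF s E(2)])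
  ultimately have "f ` E = {y}" by auto
  then have "\<Inter>(f ` E) \<in> F" using y f by auto
  then show ?thesis using E that by blast
next
  assume "\<not> |f ` A| \<le>o s"
  moreover have "|f ` A| \<le>o cardSuc s" using ordLeq_ordIso_trans[OF card_of_image A] .
  ultimately have "|f ` A| =o cardSuc s" by (rule card_of_ordIso_cardSuc_if_between[OF s(1)])
  then obtain E' where E': "E' \<subseteq> f ` A" "|E'| =o s" "\<Inter>E' \<in> F"
    by (rule GalE[OF G f])
  let ?E = "inv_into A f ` E'"
  have "bij_betw (inv_into A f) E' ?E" by (rule inj_on_imp_bij_betw[OF inj_on_inv_into[OF E'(1)]])
  then have "|E'| =o |?E|" using card_of_ordIso by blast
  then have "|?E| =o s" using ordIso_transitive[OF ordIso_symmetric E'(2)] by blast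
  moreover have "?E \<subseteq> A" using E'(1) by (auto intro: inv_into_into)
  moreover have "f ` ?E = E'" using image_inv_into_cancel[OF refl E'(1)] .
  ultimately show ?thesis using E'(3) that by simp
qed

section \<open>Filters extending the club filter\<close>

locale complete_filter_extending_clubs =
  fixes r :: "'a rel" and F :: "'a set set"
  assumes card_order: "Card_order r" and infinite: "\<not> finite (Field r)"
    and filter: "filter_over (Field r) F" and complete: "complete_filter r F"
    and clubs: "club_filter r \<subseteq> F"
begin

lemma wo: "wo_rel r"
  using card_order by (rule Card_order_wo_rel)

lemma well_order: "Well_order r"
  using card_order by (simp add: card_order_on_def)

lemma club_mem:
  assumes "club r C"
  shows "C \<in> F"
proof -
  have "C \<subseteq> Field r" using assms by (simp add: club_def)
  then have "C \<in> club_filter r" using assms unfolding club_filter_def by blast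
  then show ?thesis using clubs by blast
qed

lemma mem_subset: "X \<in> F \<Longrightarrow> X \<subseteq> Field r"
  using filter unfolding filter_over_def by blast

lemma empty_not_mem: "{} \<notin> F"
  using filter unfolding filter_over_def by blast

lemma Int_mem: "X \<in> F \<Longrightarrow> Y \<in> F \<Longrightarrow> X \<inter> Y \<in> F"
  using filter unfolding filter_over_def by blast

lemma mem_mono: "X \<in> F \<Longrightarrow> X \<subseteq> Y \<Longrightarrow> Y \<subseteq> Field r \<Longrightarrow> Y \<in> F"
  using filter unfolding filter_over_def by blast

lemma small_not_mem:
  assumes small: "|X| <o r"
  shows "X \<notin> F"
proof
  assume X: "X \<in> F"
  let ?T = "aboveS r ` X"
  have "aboveS r x \<in> F" if "x \<in> X" for x
  proof -
    have "x \<in> Field r" using mem_subset[OF X] that by blast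
    then have "club r (aboveS r x)"
      using wo_rel.club_aboveS[OF wo] infinite_Card_order_limit[OF card_order infinite] by blast
    then show ?thesis by (rule club_mem)
  qed
  then have "?T \<subseteq> F" by blast
  moreover have "?T \<noteq> {}" using X empty_not_mem by auto
  moreover have "|?T| <o r" using card_of_image small by (rule ordLeq_ordLess_trans)
  ultimately have "\<Inter>?T \<in> F" using complete by (simp add: complete_filter_def)
  then have "X \<inter> \<Inter>?T \<in> F" using X Int_mem by blast
  moreover have "X \<inter> \<Inter>?T = {}" by (auto simp: aboveS_def)
  ultimately show False using empty_not_mem by simp
qed

lemma seq_bounded:
  assumes incr: "\<And>n. g n \<in> underS r (g (Suc n))"
  shows "\<exists>u\<in>Field r. \<forall>n. (g n, u) \<in> r"
proof (rule ccontr)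
  assume unbounded: "\<not> ?thesis"
  have gF: "g n \<in> Field r" for n using incr[of n] by (auto simp: underS_def Field_def)
  have cofinal: "\<exists>n. (x, g n) \<in> r" if x: "x \<in> Field r" for x
  proof -
    obtain n where "(g n, x) \<notin> r" using unbounded x by blast
    then have "(x, g n) \<in> r" using wo_rel.in_notinI[OF wo] x gF by blast
    then show ?thesis ..
  qed
  \<comment> \<open>The even and odd terms of a cofinal \<open>\<omega>\<close>-sequence form two disjoint clubs.\<close>
  let ?even = "range (g \<circ> (\<lambda>n. 2 * n))" and ?odd = "range (g \<circ> (\<lambda>n. 2 * n + 1))"
  have "club r ?even" by (rule wo_rel.club_range_subseq[OF wo incr cofinal]) (auto intro: strict_monoI)
  moreover have "club r ?odd" by (rule wo_rel.club_range_subseq[OF wo incr cofinal]) (auto intro: strict_monoI)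
  ultimately have "?even \<inter> ?odd \<in> F" by (intro Int_mem club_mem)
  moreover have "?even \<inter> ?odd = {}"
  proof -
    have "inj g"
    proof (rule injI)
      fix m n assume "g m = g n"
      then show "m = n"
        using wo_rel.seq_underS[OF wo, of g m n] wo_rel.seq_underS[OF wo, of g n m] incr
        by (cases m n rule: linorder_cases) (auto simp: underS_def)
    qed
    moreover have "2 * m \<noteq> 2 * n + (1 :: nat)" for m n by presburger
    ultimately have "g (2 * m) \<noteq> g (2 * n + 1)" for m n by (metis injD)
    then show ?thesis by auto
  qed
  ultimately show False using empty_not_mem by simp
qed

lemma club_preimage:
  assumes s: "Well_order s" and c: "normal_cofinal r s \<delta> c"
    and D: "club s D" and lim: "limit_point s D \<delta>"
  shows "club r {i \<in> Field r. c i \<in> D}"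
proof -
  let ?P = "{i \<in> Field r. c i \<in> D}"
  have ws: "wo_rel s" using s by (simp add: wo_rel_def)
  have closedD: "closed_in_wo s D" using D by (simp add: club_def)
  have cont: "is_lub s (c ` B) (c a)" if "B \<subseteq> Field r" "B \<noteq> {}" "is_lub r B a" for B a
    using c that unfolding normal_cofinal_def by blast
  have "closed_in_wo r ?P"
    unfolding closed_in_wo_def
  proof (intro allI impI)
    fix B a assume "B \<subseteq> ?P \<and> B \<noteq> {} \<and> is_lub r B a"
    then have B: "B \<subseteq> ?P" "B \<noteq> {}" and lub: "is_lub r B a" by simp_all
    then have "is_lub s (c ` B) (c a)" by (intro cont) auto
    moreover have "c ` B \<subseteq> D" "c ` B \<noteq> {}" using B by auto
    ultimately have "c a \<in> D" using closedD unfolding closed_in_wo_def by blast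
    moreover have "a \<in> Field r" using lub by (simp add: is_lub_def)
    ultimately show "a \<in> ?P" by simp
  qed
  moreover have "unbounded_in_wo r ?P"
    unfolding wo_rel.unbounded_in_wo_iff_underS[OF wo]
  proof
    fix i0 assume i0: "i0 \<in> Field r"
    obtain nxt where nxt: "\<And>k. k \<in> Field r \<Longrightarrow>
        k \<in> underS r (nxt k) \<and> (\<exists>d\<in>D. c k \<in> underS s d \<and> (d, c (nxt k)) \<in> s)"
      using normal_cofinal_limit_point_step[OF well_order s c lim] by metis
    \<comment> \<open>Points of \<open>D\<close> interleave the \<open>c\<close>-values along \<open>g\<close>, so by continuity of \<open>c\<close>
      the supremum \<open>j\<close> of \<open>g\<close> is mapped to a limit of \<open>D\<close>.\<close>
    define g where "g n = (nxt ^^ n) i0" for n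
    have gF: "g n \<in> Field r" for n
    proof (induction n)
      case 0
      then show ?case using i0 by (simp add: g_def)
    next
      case (Suc n)
      then have "g n \<in> underS r (nxt (g n))" using nxt by blast
      then show ?case by (auto simp: g_def underS_def Field_def)
    qed
    have incr: "g n \<in> underS r (g (Suc n))" for n using nxt[OF gF[of n]] by (simp add: g_def)
    obtain u where u: "u \<in> Field r" "\<forall>n. (g n, u) \<in> r" using seq_bounded[of g, OF incr] by blast
    let ?B = "range (g \<circ> Suc)"
    have BF: "?B \<subseteq> Field r" using gF by auto
    have "u \<in> Above r ?B" using u by (auto simp: Above_def)
    then obtain j where j: "is_lub r ?B j" using wo_rel.is_lub_supr[OF wo BF] by blast
    have "(g 1, j) \<in> r" using j by (simp add: is_lub_def)
    then have "i0 \<in> underS r j" using wo_rel.underS_under_trans[OF wo incr[of 0]] by (simp add: g_def)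
    moreover have "c j \<in> D"
    proof (rule wo_rel.closed_in_wo_lub_mem[OF ws closedD])
      show lub: "is_lub s (c ` ?B) (c j)" using cont BF j by blast
      show "c ` ?B \<noteq> {}" by blast
      fix a assume "a \<in> c ` ?B"
      then obtain n where a: "a = c (g (Suc n))" by auto
      obtain d where d: "d \<in> D" "a \<in> underS s d" "(d, c (g (Suc (Suc n)))) \<in> s"
        using nxt[OF gF[of "Suc n"]] a by (auto simp: g_def)
      have "(c (g (Suc (Suc n))), c j) \<in> s" using lub by (simp add: is_lub_def)
      then have "(d, c j) \<in> s" using d(3) wo_rel.TRANS[OF ws] by (auto dest: transD)
      then show "\<exists>d\<in>D. (a, d) \<in> s \<and> (d, c j) \<in> s" using d by (auto simp: underS_def)
    qed
    moreover have "j \<in> Field r" using j by (simp add: is_lub_def)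
    ultimately show "\<exists>j\<in>?P. i0 \<in> underS r j" by blast
  qed
  ultimately show ?thesis by (simp add: club_def)
qed

lemma club_filter_reflects:
  assumes s: "Card_order s" "regularCard s" "r <o s" and D: "D \<in> club_filter s"
  shows "\<exists>\<delta>\<in>Field s. (\<exists>c. normal_cofinal r s \<delta> c) \<and>
           (\<forall>c. normal_cofinal r s \<delta> c \<longrightarrow> {i \<in> Field r. c i \<in> D} \<in> F)"
proof -
  obtain D' where D': "club s D'" "D' \<subseteq> D" using D by (auto simp: club_filter_def)
  obtain \<delta> where \<delta>: "\<delta> \<in> Field s" "\<exists>c. normal_cofinal r s \<delta> c" "limit_point s D' \<delta>"
    using exists_normal_cofinal_limit_point[OF card_order infinite s D'(1)] by blast
  have "{i \<in> Field r. c i \<in> D} \<in> F" if c: "normal_cofinal r s \<delta> c" for c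
  proof (rule mem_mono)
    have "Well_order s" using s(1) by (simp add: card_order_on_def)
    then show "{i \<in> Field r. c i \<in> D'} \<in> F" by (rule club_mem[OF club_preimage[OF _ c D'(1) \<delta>(3)]])
  qed (use D'(2) in auto)
  then show ?thesis using \<delta> by blast
qed

lemma not_neg_st_Gal_if_Gal:
  assumes G: "Gal F (cardSuc r) (cardSuc (cardSuc r))"
  shows "\<not> neg_st_Gal r (cardSuc r) (cardSuc (cardSuc r))"
proof
  let ?s = "cardSuc r"
  have s: "Card_order ?s" "\<not> finite (Field ?s)" "regularCard ?s" "r <o ?s"
    using cardSuc_Card_order[OF card_order] cardSuc_finite[OF card_order] infinite
      infinite_cardSuc_regularCard[OF infinite card_order] cardSuc_greater[OF card_order] by auto
  assume "neg_st_Gal r ?s (cardSuc ?s)"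
  then obtain C where C: "C \<subseteq> club_filter ?s" "|C| =o cardSuc ?s"
    and thin: "\<And>E. E \<subseteq> C \<Longrightarrow> |E| =o ?s \<Longrightarrow> |\<Inter>E| <o r"
    unfolding neg_st_Gal_def by blast
  define reflects where "reflects D \<delta> \<longleftrightarrow> \<delta> \<in> Field ?s \<and> (\<exists>c. normal_cofinal r ?s \<delta> c) \<and>
      (\<forall>c. normal_cofinal r ?s \<delta> c \<longrightarrow> {i \<in> Field r. c i \<in> D} \<in> F)" for D \<delta>
  have "\<exists>\<delta>. reflects D \<delta>" if "D \<in> C" for D
    using club_filter_reflects[OF s(1,3,4) subsetD[OF C(1) that]] unfolding reflects_def by blast
  then obtain \<delta> where \<delta>: "\<And>D. D \<in> C \<Longrightarrow> reflects D (\<delta> D)" by metis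
  then have "\<delta> ` C \<subseteq> Field ?s" by (auto simp: reflects_def)
  \<comment> \<open>Clubs sharing \<open>\<delta>0\<close> are all pulled back into \<open>F\<close> by one and the same map \<open>c\<close>.\<close>
  then obtain \<delta>0 where C1: "|{D \<in> C. \<delta> D = \<delta>0}| =o cardSuc ?s"
    by (rule obtain_fiber_card_of_ordIso_cardSuc[OF s(1,2) C(2)])
  let ?C1 = "{D \<in> C. \<delta> D = \<delta>0}"
  have "\<not> finite (Field (cardSuc ?s))" using cardSuc_finite[OF s(1)] s(2) by simp
  then obtain D0 where "D0 \<in> ?C1"
    using nonempty_if_card_of_ordIso_infinite[OF cardSuc_Card_order[OF s(1)] _ C1] by blast
  then obtain c where c: "normal_cofinal r ?s \<delta>0 c" using \<delta> by (auto simp: reflects_def)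
  let ?f = "\<lambda>D. {i \<in> Field r. c i \<in> D}"
  have "?f ` ?C1 \<subseteq> F" using \<delta> c by (auto simp: reflects_def)
  then obtain E where E: "E \<subseteq> ?C1" "|E| =o ?s" and X: "\<Inter>(?f ` E) \<in> F"
    by (rule Gal_cardSuc_imageE[OF s(1,2) G C1])
  let ?X = "\<Inter>(?f ` E)"
  have "E \<subseteq> C" using E(1) by blast
  then have "|\<Inter>E| <o r" using thin E(2) by blast
  moreover have "|?X| \<le>o |\<Inter>E|"
  proof -
    have "inj_on c ?X" using inj_on_subset[OF normal_cofinal_inj_on[OF well_order c] mem_subset[OF X]] .
    moreover have "c ` ?X \<subseteq> \<Inter>E" by auto
    ultimately show ?thesis unfolding card_of_ordLeq[symmetric] by blast
  qed
  ultimately have "|?X| <o r" using ordLeq_ordLess_trans by blast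
  then show False using small_not_mem X by blast
qed

end

theorem proposition6p4:
  fixes r :: "'a rel" and F :: "'a set set"
  assumes "Card_order r"
    and "\<not> finite (Field r)"
    and "filter_over (Field r) F"
    and "complete_filter r F"
    and "club_filter r \<subseteq> F"
  shows "(Gal F (cardSuc r) (cardSuc (cardSuc r)) \<longrightarrow>
            \<not> neg_st_Gal r (cardSuc r) (cardSuc (cardSuc r)))
       \<and> (Gal F (cardSuc r) (cardSuc r) \<longrightarrow>
            \<not> neg_st_Gal r (cardSuc r) (cardSuc (cardSuc r)))"
proof -
  interpret complete_filter_extending_clubs r F
    using assms by unfold_locales
  have s: "Card_order (cardSuc r)" using cardSuc_Card_order[OF assms(1)] .
  have "Gal F (cardSuc r) (cardSuc (cardSuc r))" if "Gal F (cardSuc r) (cardSuc r)"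
    using Gal_mono[OF that s cardSuc_ordLeq[OF s]] .
  then show ?thesis using not_neg_st_Gal_if_Gal by blast
qed

end
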